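(* Let $\Gamma$ be a group, $\alpha\in\mathrm{Aut}(\Gamma)$ and $\omega:\Gamma\times\Gamma\to\Gamma$, $\omega(g,h)=\alpha(g)$. The map $\kappa:\prod_{\mathbb Q_2}\Gamma\to K(\omega)$ sending $f:\mathbb Q_2\to\Gamma$ to the map $\{0,1\}^*\to\Gamma$, $u\mapsto\alpha^{-|u|}(f(u00\cdots))$, is a well-defined isomorphism of groups.
   Context: $\{0,1\}^*$ denotes the finite words over $\{0,1\}$ (including the empty word), $|u|$ the length of $u$; $\mathbb Q_2\subset\{0,1\}^{\mathbb N}$ is the set of eventually-zero sequences, each of the form $u00\cdots$ with $u\in\{0,1\}^*$. $\prod_{\mathbb Q_2}\Gamma$ is the group of all maps $\mathbb Q_2\to\Gamma$ under pointwise product. $K(\omega)$ is the group (pointwise product) of maps $a:\{0,1\}^*\to\Gamma$ with $a(u)=\omega(a(u0),a(u1))$ for all $u$. *)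

theory Defs
  imports "HOL-Algebra.Algebra"
begin

text \<open>Binary digits: False = 0, True = 1. Finite words are bool lists.
  Q2 = eventually-zero sequences in {0,1}^N.\<close>

definition Q2 :: "(nat \<Rightarrow> bool) set" where
  "Q2 = {s. \<exists>N. \<forall>n\<ge>N. \<not> s n}"

definition pad0 :: "bool list \<Rightarrow> (nat \<Rightarrow> bool)" where
  "pad0 u = (\<lambda>n. if n < length u then u ! n else False)"

definition K_group :: "('g, 'z) monoid_scheme \<Rightarrow> ('g \<Rightarrow> 'g \<Rightarrow> 'g) \<Rightarrow> (bool list \<Rightarrow> 'g) monoid" where
  "K_group G \<omega> = \<lparr>carrier = {a. (\<forall>u. a u \<in> carrier G) \<and>
                        (\<forall>u. a u = \<omega> (a (u @ [False])) (a (u @ [True])))},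
                 monoid.mult = (\<lambda>a b u. a u \<otimes>\<^bsub>G\<^esub> b u),
                 one = (\<lambda>u. \<one>\<^bsub>G\<^esub>)\<rparr>"

end

theory Submission
  imports Defs
begin

text \<open>Since \<open>\<omega>\<close> ignores its second argument, \<open>a \<in> K(\<omega>)\<close> just says \<open>a(u) = \<alpha>(a(u0))\<close> for all
  \<open>u\<close>, i.e. the renormalised map \<open>u \<mapsto> \<alpha>^|u|(a(u))\<close> is invariant under appending a zero. Such
  maps are exactly those factoring through \<open>u \<mapsto> u00\<cdots>\<close>, whose image is \<open>\<bbbQ>\<^sub>2\<close>. Hence \<open>\<kappa>\<close>,
  which undoes the renormalisation, is a bijection onto \<open>K(\<omega>)\<close>; it is a homomorphism because it
  acts on each coordinate by an automorphism.\<close>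

lemma Q2_eq_range_pad0: "Q2 = range pad0"
proof
  show "range pad0 \<subseteq> Q2"
  proof
    fix s assume "s \<in> range pad0"
    then obtain u where "s = pad0 u" by blast
    then have "\<forall>n\<ge>length u. \<not> s n" by (simp add: pad0_def)
    then show "s \<in> Q2" by (auto simp: Q2_def)
  qed
  show "Q2 \<subseteq> range pad0"
  proof
    fix s assume "s \<in> Q2"
    then obtain N where N: "\<forall>n\<ge>N. \<not> s n" by (auto simp: Q2_def)
    then have "pad0 (map s [0..<N]) = s"
      unfolding pad0_def by (auto simp: not_less)
    then show "s \<in> range pad0" by (metis rangeI)
  qed
qed

lemma pad0_in_Q2: "pad0 u \<in> Q2"
  by (simp add: Q2_eq_range_pad0)

lemma pad0_append_False: "pad0 (u @ [False]) = pad0 u"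
  by (auto simp: pad0_def nth_append)

lemma pad0_eq_imp_append_zeros:
  assumes "pad0 u = pad0 v" "length u \<le> length v"
  shows "v = u @ replicate (length v - length u) False"
proof (rule nth_equalityI)
  fix i assume "i < length v"
  moreover have "pad0 u i = pad0 v i" using assms(1) by simp
  ultimately show "v ! i = (u @ replicate (length v - length u) False) ! i"
    by (auto simp: pad0_def nth_append split: if_splits)
qed (use assms(2) in simp)

lemma pad0_eq_imp_eq_if_append_False_invariant:
  assumes invariant: "\<And>u. c (u @ [False]) = c u" and "pad0 u = pad0 v"
  shows "c u = c v"
proof -
  have append_zeros: "c (w @ replicate k False) = c w" for w k
  proof (induction k)
    case (Suc k)
    then show ?case
      using invariant[of "w @ replicate k False"] by (simp flip: replicate_append_same)
  qed simp
  have "c u = c v" if "pad0 u = pad0 v" "length u \<le> length v" for u v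
    using append_zeros[of u "length v - length u"] pad0_eq_imp_append_zeros[OF that] by simp
  then show ?thesis
    using \<open>pad0 u = pad0 v\<close> by (metis nat_le_linear)
qed

lemma funpow_iso: "h \<in> iso G G \<Longrightarrow> h ^^ n \<in> iso G G"
  by (induction n) (simp_all add: id_iso iso_set_trans)

lemma funpow_left_inverse_on:
  assumes "f ` A \<subseteq> A" "\<And>x. x \<in> A \<Longrightarrow> g (f x) = x" "x \<in> A"
  shows "(g ^^ n) ((f ^^ n) x) = x"
  using assms(3)
proof (induction n arbitrary: x)
  case (Suc n)
  have "(f ^^ n) x \<in> A"
    using Suc.prems assms(1) by (induction n) auto
  have "(g ^^ Suc n) ((f ^^ Suc n) x) = (g ^^ n) (g (f ((f ^^ n) x)))"
    by (metis comp_apply funpow.simps(2) funpow_Suc_right)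
  also have "\<dots> = x"
    using Suc \<open>(f ^^ n) x \<in> A\<close> by (simp add: assms(2))
  finally show ?case .
qed simp

locale group_automorphism = group G for G (structure) +
  fixes \<alpha> :: "'a \<Rightarrow> 'a"
  assumes automorphism: "\<alpha> \<in> iso G G"
begin

abbreviation \<alpha>_inv :: "'a \<Rightarrow> 'a"
  where "\<alpha>_inv \<equiv> inv_into (carrier G) \<alpha>"

abbreviation K :: "(bool list \<Rightarrow> 'a) monoid"
  where "K \<equiv> K_group G (\<lambda>g h. \<alpha> g)"

abbreviation P :: "((nat \<Rightarrow> bool) \<Rightarrow> 'a) monoid"
  where "P \<equiv> product_group Q2 (\<lambda>_. G)"

definition \<kappa> :: "((nat \<Rightarrow> bool) \<Rightarrow> 'a) \<Rightarrow> bool list \<Rightarrow> 'a"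
  where "\<kappa> f u = (\<alpha>_inv ^^ length u) (f (pad0 u))"

lemma carrier_K: "carrier K = {a. (\<forall>u. a u \<in> carrier G) \<and> (\<forall>u. a u = \<alpha> (a (u @ [False])))}"
  by (simp add: K_group_def)

lemma funpow_\<alpha>_inv_iso: "\<alpha>_inv ^^ n \<in> iso G G"
  by (rule funpow_iso[OF iso_set_sym[OF automorphism]])

lemma funpow_\<alpha>_inv_closed: "x \<in> carrier G \<Longrightarrow> (\<alpha>_inv ^^ n) x \<in> carrier G"
  by (rule hom_in_carrier[OF iso_imp_homomorphism[OF funpow_\<alpha>_inv_iso]])

lemma \<alpha>_\<alpha>_inv: "x \<in> carrier G \<Longrightarrow> \<alpha> (\<alpha>_inv x) = x"
  using automorphism unfolding iso_iff by (metis f_inv_into_f)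

lemma funpow_\<alpha>_inv_\<alpha>: "x \<in> carrier G \<Longrightarrow> (\<alpha>_inv ^^ n) ((\<alpha> ^^ n) x) = x"
  using automorphism unfolding iso_iff by (metis funpow_left_inverse_on inv_into_f_f order_refl)

lemma carrier_P_pad0: "f \<in> carrier P \<Longrightarrow> f (pad0 u) \<in> carrier G"
  using pad0_in_Q2 by auto

lemma \<kappa>_hom: "\<kappa> \<in> hom P K"
proof (rule homI)
  fix f assume "f \<in> carrier P"
  note f = carrier_P_pad0[OF this]
  have "\<kappa> f u = \<alpha> (\<kappa> f (u @ [False]))" for u
    using f by (simp add: \<kappa>_def pad0_append_False \<alpha>_\<alpha>_inv funpow_\<alpha>_inv_closed)
  moreover have "\<kappa> f u \<in> carrier G" for u
    using f by (simp add: \<kappa>_def funpow_\<alpha>_inv_closed)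
  ultimately show "\<kappa> f \<in> carrier K"
    unfolding carrier_K by blast
next
  fix f g assume f: "f \<in> carrier P" and g: "g \<in> carrier P"
  show "\<kappa> (f \<otimes>\<^bsub>P\<^esub> g) = \<kappa> f \<otimes>\<^bsub>K\<^esub> \<kappa> g"
  proof
    fix u
    have "(f \<otimes>\<^bsub>P\<^esub> g) (pad0 u) = f (pad0 u) \<otimes> g (pad0 u)"
      using pad0_in_Q2 by simp
    then show "\<kappa> (f \<otimes>\<^bsub>P\<^esub> g) u = (\<kappa> f \<otimes>\<^bsub>K\<^esub> \<kappa> g) u"
      using hom_mult[OF iso_imp_homomorphism[OF funpow_\<alpha>_inv_iso] carrier_P_pad0[OF f] carrier_P_pad0[OF g]]
      by (simp add: \<kappa>_def K_group_def)
  qed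
qed

lemma \<kappa>_inj: "inj_on \<kappa> (carrier P)"
proof (rule inj_onI, rule ext)
  fix f g s assume "f \<in> carrier P" "g \<in> carrier P" and eq: "\<kappa> f = \<kappa> g"
  then have f: "f \<in> Q2 \<rightarrow>\<^sub>E carrier G" and g: "g \<in> Q2 \<rightarrow>\<^sub>E carrier G"
    by simp_all
  show "f s = g s"
  proof (cases "s \<in> Q2")
    case True
    then obtain u where s: "s = pad0 u"
      unfolding Q2_eq_range_pad0 by blast
    have "(\<alpha>_inv ^^ length u) (f s) = (\<alpha>_inv ^^ length u) (g s)"
      using fun_cong[OF eq, of u] by (simp add: \<kappa>_def s)
    moreover have "inj_on (\<alpha>_inv ^^ length u) (carrier G)"
      using funpow_\<alpha>_inv_iso unfolding iso_iff by blast
    ultimately show ?thesis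
      using PiE_mem[OF f True] PiE_mem[OF g True] by (simp add: inj_on_eq_iff)
  next
    case False
    then show ?thesis
      using PiE_arb[OF f] PiE_arb[OF g] by simp
  qed
qed

lemma \<kappa>_surj: "carrier K \<subseteq> \<kappa> ` carrier P"
proof
  fix a assume "a \<in> carrier K"
  then have a: "a u \<in> carrier G" "a u = \<alpha> (a (u @ [False]))" for u
    unfolding carrier_K by blast+
  define c where "c u = (\<alpha> ^^ length u) (a u)" for u
  have "c (u @ [False]) = c u" for u
    by (simp add: c_def funpow_Suc_right a(2)[of u, symmetric] del: funpow.simps)
  then have c_pad0: "c (inv_into UNIV pad0 (pad0 u)) = c u" for u
    by (rule pad0_eq_imp_eq_if_append_False_invariant) (simp add: f_inv_into_f)
  define f where "f = (\<lambda>s\<in>Q2. c (inv_into UNIV pad0 s))"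
  have "c u \<in> carrier G" for u
    using a(1) funpow_iso[OF automorphism] unfolding c_def by (metis iso_imp_homomorphism hom_in_carrier)
  then have "f \<in> carrier P"
    by (simp add: f_def)
  moreover have "\<kappa> f = a"
  proof
    fix u
    have "f (pad0 u) = c u"
      by (simp add: f_def pad0_in_Q2 c_pad0)
    then show "\<kappa> f u = a u"
      by (simp add: \<kappa>_def c_def funpow_\<alpha>_inv_\<alpha> a(1))
  qed
  ultimately show "a \<in> \<kappa> ` carrier P"
    by blast
qed

lemma \<kappa>_iso: "\<kappa> \<in> iso P K"
proof -
  have "\<kappa> ` carrier P = carrier K"
    using hom_carrier[OF \<kappa>_hom] \<kappa>_surj by (rule subset_antisym)
  then show ?thesis
    using \<kappa>_hom \<kappa>_inj unfolding iso_iff by blast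
qed

end

theorem mainTheorem6:
  fixes G :: "('g, 'z) monoid_scheme" and \<alpha> :: "'g \<Rightarrow> 'g"
  assumes "group G"
    and "\<alpha> \<in> iso G G"
  shows "(\<lambda>f. \<lambda>u. (inv_into (carrier G) \<alpha> ^^ length u) (f (pad0 u)))
           \<in> iso (product_group Q2 (\<lambda>_. G)) (K_group G (\<lambda>g h. \<alpha> g))"
proof -
  interpret group_automorphism G \<alpha>
    using assms by (simp add: group_automorphism_def group_automorphism_axioms_def)
  show ?thesis
    using \<kappa>_iso by (simp only: \<kappa>_def[abs_def])
qed

end
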